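(* Under the hypotheses and notation of the following setting, let $0 \le \mathcal{Q}_l \le \mathcal{Q}_u < \mathbf{C}_0(N_0)$ and let $\bar{x}_l$ and $\bar{x}_u$ be the coordinates returned by the hierarchical search procedure on queries $\mathcal{Q}_l$ and $\mathcal{Q}_u$ respectively. Then $\big|\,(\mathbf{C}(\bar{x}_u) - \mathbf{C}(\bar{x}_l)) - (\mathcal{Q}_u - \mathcal{Q}_l)\,\big| < \Delta_{d-1}$. Consequently, if queries $\mathcal{Q}_0 \le \mathcal{Q}_1 \le \cdots$ are equally spaced with spacing $s$ (and all lie in $[0,\mathbf{C}_0(N_0))$), then for any two consecutive partitions $[\bar{x}^{(p)}, \bar{x}^{(p+1)})$ and $[\bar{x}^{(q)}, \bar{x}^{(q+1)})$ the costs $\mathbf{C}(\bar{x}^{(p+1)})-\mathbf{C}(\bar{x}^{(p)})$ and $\mathbf{C}(\bar{x}^{(q+1)})-\mathbf{C}(\bar{x}^{(q)})$ differ by less than $2\Delta_{d-1}$.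
   Context: Setting: $d \ge 1$, positive integers $N_0,\ldots,N_{d-1}$. For each $m$ and each prefix $\bar{x}_m=(x_0,\ldots,x_{m-1})$ with $x_k\in\{0,\ldots,N_k-1\}$, a cost function $\mathbf{C}_m(\cdot\mid\bar{x}_m):\{0,\ldots,N_m\}\to\mathbb{R}_{\ge0}$ with $\mathbf{C}_m(0\mid\bar{x}_m)=0$, monotone ($\mathbf{C}_m(x\mid\bar{x}_m)\le\mathbf{C}_m(x+1\mid\bar{x}_m)$), and hierarchically consistent: for $m<d-1$ and $x_m\in\{0,\ldots,N_m-1\}$, $\mathbf{C}_m(x_m+1\mid\bar{x}_m)=\mathbf{C}_m(x_m\mid\bar{x}_m)+\mathbf{C}_{m+1}(N_{m+1}\mid\bar{x}_m,x_m)$. $\Delta_{d-1}$ is the maximum of $\mathbf{C}_{d-1}(x+1\mid\bar{x}_{d-1})-\mathbf{C}_{d-1}(x\mid\bar{x}_{d-1})$ over all prefixes $\bar{x}_{d-1}$ and $0\le x<N_{d-1}$. For $\bar{x}=(x_0,\ldots,x_{d-1})$, $\mathbf{C}(\bar{x})=\sum_{m=0}^{d-1}\mathbf{C}_m(x_m\mid x_0,\ldots,x_{m-1})$. The hierarchical search procedure on query $\mathcal{Q}$: set $\mathcal{R}_0=\mathcal{Q}$; for $m=0,\ldots,d-1$, let $x_m$ be the largest $x\in\{0,\ldots,N_m-1\}$ with $\mathbf{C}_m(x\mid x_0,\ldots,x_{m-1})\le\mathcal{R}_m$ and set $\mathcal{R}_{m+1}=\mathcal{R}_m-\mathbf{C}_m(x_m\mid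 x_0,\ldots,x_{m-1})$; return $(x_0,\ldots,x_{d-1})$. *)

theory Defs
  imports Complex_Main
begin

text \<open>Cost functions are modelled as C :: nat => nat list => nat => real,
  where C m xs x stands for C_m(x | xs), xs being the prefix (x_0,...,x_{m-1}).\<close>

definition valid_prefix :: "(nat \<Rightarrow> nat) \<Rightarrow> nat \<Rightarrow> nat list \<Rightarrow> bool" where
  "valid_prefix N m xs \<longleftrightarrow> length xs = m \<and> (\<forall>k<m. xs ! k < N k)"

definition hier_costs :: "nat \<Rightarrow> (nat \<Rightarrow> nat) \<Rightarrow> (nat \<Rightarrow> nat list \<Rightarrow> nat \<Rightarrow> real) \<Rightarrow> bool" where
  "hier_costs d N C \<longleftrightarrow>
     d \<ge> 1 \<and> (\<forall>k<d. N k > 0) \<and>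
     (\<forall>m<d. \<forall>xs. valid_prefix N m xs \<longrightarrow>
        C m xs 0 = 0 \<and>
        (\<forall>x\<le>N m. C m xs x \<ge> 0) \<and>
        (\<forall>x<N m. C m xs x \<le> C m xs (Suc x)) \<and>
        (m < d - 1 \<longrightarrow> (\<forall>x<N m. C m xs (Suc x) = C m xs x + C (Suc m) (xs @ [x]) (N (Suc m)))))"

definition Delta :: "nat \<Rightarrow> (nat \<Rightarrow> nat) \<Rightarrow> (nat \<Rightarrow> nat list \<Rightarrow> nat \<Rightarrow> real) \<Rightarrow> real" where
  "Delta d N C = Max {C (d - 1) xs (Suc x) - C (d - 1) xs x | xs x.
                        valid_prefix N (d - 1) xs \<and> x < N (d - 1)}"

definition total_cost :: "(nat \<Rightarrow> nat list \<Rightarrow> nat \<Rightarrow> real) \<Rightarrow> nat list \<Rightarrow> real" where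
  "total_cost C xs = (\<Sum>m<length xs. C m (take m xs) (xs ! m))"

text \<open>Hierarchical search: k remaining levels, current level m, prefix xs, residual R.\<close>
primrec hsearch_aux :: "(nat \<Rightarrow> nat) \<Rightarrow> (nat \<Rightarrow> nat list \<Rightarrow> nat \<Rightarrow> real) \<Rightarrow> nat \<Rightarrow> nat \<Rightarrow> nat list \<Rightarrow> real \<Rightarrow> nat list" where
  "hsearch_aux N C 0 m xs R = xs"
| "hsearch_aux N C (Suc k) m xs R =
     (let x = Max {x. x < N m \<and> C m xs x \<le> R}
      in hsearch_aux N C k (Suc m) (xs @ [x]) (R - C m xs x))"

definition hsearch :: "nat \<Rightarrow> (nat \<Rightarrow> nat) \<Rightarrow> (nat \<Rightarrow> nat list \<Rightarrow> nat \<Rightarrow> real) \<Rightarrow> real \<Rightarrow> nat list" where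
  "hsearch d N C Q = hsearch_aux N C d 0 [] Q"

end

theory Submission
  imports Defs
begin

text \<open>The search is greedy: at level m it picks the largest x_m whose cost does not exceed
  the residual R_m, so the new residual lies in [0, C_m(x_m+1) - C_m(x_m)). By hierarchical
  consistency this gap is the full cost C_{m+1}(N_{m+1}) of the next level, so the invariant
  0 <= R_m < C_m(N_m) passes from level to level; at the last level the gap is at most Delta.
  Hence the final residual Q - C(hsearch Q) lies in [0, Delta) for every query, and both claims
  are differences of two such residuals.\<close>

lemma total_cost_snoc: "total_cost C (xs @ [x]) = total_cost C xs + C (length xs) xs x"
proof -
  have "(\<Sum>m<length xs. C m (take m (xs @ [x])) ((xs @ [x]) ! m)) = total_cost C xs"
    unfolding total_cost_def by (intro sum.cong) (auto simp: nth_append)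
  then show ?thesis
    by (simp add: total_cost_def)
qed

lemma greedy_choice:
  fixes f :: "nat \<Rightarrow> real"
  assumes "0 < n" "f 0 = 0" "0 \<le> R" "R < f n"
    and x_def: "x = Max {x. x < n \<and> f x \<le> R}"
  shows "x < n" "f x \<le> R" "R < f (Suc x)"
proof -
  let ?S = "{x. x < n \<and> f x \<le> R}"
  have "finite ?S"
    by (rule finite_subset[of _ "{..<n}"]) auto
  moreover have "0 \<in> ?S"
    using assms by auto
  ultimately have x_in: "x \<in> ?S" and x_max: "\<And>y. y \<in> ?S \<Longrightarrow> y \<le> x"
    using x_def Max_in Max_ge by blast+
  then show "x < n" "f x \<le> R"
    by auto
  show "R < f (Suc x)"
  proof (cases "Suc x < n")
    case True
    then show ?thesis
      using x_max[of "Suc x"] by force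
  next
    case False
    then have "Suc x = n"
      using x_in by simp
    then show ?thesis
      using \<open>R < f n\<close> by simp
  qed
qed

lemma finite_valid_prefixes: "finite {xs. valid_prefix N m xs}"
proof (rule finite_subset)
  have "N k \<le> (\<Sum>k<m. N k)" if "k < m" for k
    using that by (intro member_le_sum) auto
  then show "{xs. valid_prefix N m xs} \<subseteq> {xs. set xs \<subseteq> {..<(\<Sum>k<m. N k)} \<and> length xs = m}"
    by (fastforce simp: valid_prefix_def in_set_conv_nth)
  show "finite {xs. set xs \<subseteq> {..<(\<Sum>k<m. N k)} \<and> length xs = m}"
    by (rule finite_lists_length_eq) simp
qed

lemma last_increment_le_Delta:
  assumes "valid_prefix N (d - 1) xs" "x < N (d - 1)"
  shows "C (d - 1) xs (Suc x) - C (d - 1) xs x \<le> Delta d N C"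
proof -
  let ?inc = "\<lambda>(xs, x). C (d - 1) xs (Suc x) - C (d - 1) xs x"
  have "{C (d - 1) xs (Suc x) - C (d - 1) xs x | xs x. valid_prefix N (d - 1) xs \<and> x < N (d - 1)}
      = ?inc ` ({xs. valid_prefix N (d - 1) xs} \<times> {..<N (d - 1)})"
    by auto
  then have "finite {C (d - 1) xs (Suc x) - C (d - 1) xs x | xs x.
      valid_prefix N (d - 1) xs \<and> x < N (d - 1)}"
    using finite_valid_prefixes by simp
  then show ?thesis
    unfolding Delta_def by (rule Max_ge) (use assms in blast)
qed

lemma hsearch_level_choice:
  assumes "hier_costs d N C" "valid_prefix N m xs" "m < d" "0 \<le> R" "R < C m xs (N m)"
  defines "x \<equiv> Max {x. x < N m \<and> C m xs x \<le> R}"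
  shows "x < N m" "C m xs x \<le> R" "R < C m xs (Suc x)"
proof -
  have "N m > 0" "C m xs 0 = 0"
    using assms by (auto simp: hier_costs_def)
  then show "x < N m" "C m xs x \<le> R" "R < C m xs (Suc x)"
    using greedy_choice[of "N m" "C m xs" R x] assms(4,5) unfolding x_def by auto
qed

lemma hsearch_aux_residual:
  assumes hyp: "hier_costs d N C"
    and "valid_prefix N m xs" "m + Suc k = d" "0 \<le> R" "R < C m xs (N m)"
  defines "r \<equiv> total_cost C xs + R - total_cost C (hsearch_aux N C (Suc k) m xs R)"
  shows "0 \<le> r \<and> r < Delta d N C"
  using assms(2-5) unfolding r_def
proof (induction k arbitrary: m xs R)
  case k: (0 m xs R)
  define x where "x = Max {x. x < N m \<and> C m xs x \<le> R}"
  have m_last: "m = d - 1" and "length xs = m"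
    using k by (auto simp: valid_prefix_def)
  have x: "x < N m" "C m xs x \<le> R" "R < C m xs (Suc x)"
    using hsearch_level_choice[OF hyp k(1) _ k(3,4)] k(2) unfolding x_def by auto
  moreover have "C m xs (Suc x) - C m xs x \<le> Delta d N C"
    using last_increment_le_Delta[of N d xs x C] k(1) x(1) m_last by simp
  ultimately show ?case
    using \<open>length xs = m\<close> by (simp add: Let_def x_def[symmetric] total_cost_snoc)
next
  case (Suc k m xs R)
  define x where "x = Max {x. x < N m \<and> C m xs x \<le> R}"
  have "length xs = m"
    using Suc by (simp add: valid_prefix_def)
  have x: "x < N m" "C m xs x \<le> R" "R < C m xs (Suc x)"
    using hsearch_level_choice[OF hyp Suc(2) _ Suc(4,5)] Suc(3) unfolding x_def by auto
  have "valid_prefix N (Suc m) (xs @ [x])"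
    using Suc(2) x by (auto simp: valid_prefix_def nth_append less_Suc_eq)
  moreover have "C m xs (Suc x) = C m xs x + C (Suc m) (xs @ [x]) (N (Suc m))"
    using hyp Suc(2,3) x by (auto simp: hier_costs_def)
  moreover have "hsearch_aux N C (Suc (Suc k)) m xs R
      = hsearch_aux N C (Suc k) (Suc m) (xs @ [x]) (R - C m xs x)"
    by (simp add: x_def Let_def)
  ultimately show ?case
    using Suc.IH[of "Suc m" "xs @ [x]" "R - C m xs x"] Suc(3) x \<open>length xs = m\<close>
    by (simp add: total_cost_snoc del: hsearch_aux.simps)
qed

lemma hsearch_residual:
  assumes hyp: "hier_costs d N C" and "0 \<le> Q" "Q < C 0 [] (N 0)"
  shows "0 \<le> Q - total_cost C (hsearch d N C Q)" "Q - total_cost C (hsearch d N C Q) < Delta d N C"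
proof -
  obtain k where "d = Suc k"
    using hyp by (cases d) (auto simp: hier_costs_def)
  then show "0 \<le> Q - total_cost C (hsearch d N C Q)" "Q - total_cost C (hsearch d N C Q) < Delta d N C"
    using hsearch_aux_residual[OF hyp, of 0 "[]" k Q] assms
    by (simp_all add: hsearch_def total_cost_def valid_prefix_def)
qed

theorem mainTheorem2:
  fixes d :: nat and N :: "nat \<Rightarrow> nat" and C :: "nat \<Rightarrow> nat list \<Rightarrow> nat \<Rightarrow> real"
  assumes hyp: "hier_costs d N C"
  shows "(\<forall>Ql Qu :: real. 0 \<le> Ql \<longrightarrow> Ql \<le> Qu \<longrightarrow> Qu < C 0 [] (N 0) \<longrightarrow>
            \<bar>(total_cost C (hsearch d N C Qu) - total_cost C (hsearch d N C Ql)) - (Qu - Ql)\<bar>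
              < Delta d N C)
       \<and> (\<forall>(Q :: nat \<Rightarrow> real) (s :: real) p q.
            s \<ge> 0 \<longrightarrow> (\<forall>i. Q (Suc i) = Q i + s) \<longrightarrow>
            (\<forall>i\<in>{p, Suc p, q, Suc q}. 0 \<le> Q i \<and> Q i < C 0 [] (N 0)) \<longrightarrow>
            \<bar>(total_cost C (hsearch d N C (Q (Suc p))) - total_cost C (hsearch d N C (Q p)))
             - (total_cost C (hsearch d N C (Q (Suc q))) - total_cost C (hsearch d N C (Q q)))\<bar>
              < 2 * Delta d N C)"
proof (intro conjI allI impI)
  fix Ql Qu :: real
  assume "0 \<le> Ql" "Ql \<le> Qu" "Qu < C 0 [] (N 0)"
  with hsearch_residual[OF hyp, of Ql] hsearch_residual[OF hyp, of Qu]
  show "\<bar>(total_cost C (hsearch d N C Qu) - total_cost C (hsearch d N C Ql)) - (Qu - Ql)\<bar>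
      < Delta d N C"
    by (simp add: abs_less_iff)
next
  fix Q :: "nat \<Rightarrow> real" and s :: real and p q :: nat
  assume "\<forall>i. Q (Suc i) = Q i + s" and "\<forall>i\<in>{p, Suc p, q, Suc q}. 0 \<le> Q i \<and> Q i < C 0 [] (N 0)"
  with hsearch_residual[OF hyp, of "Q p"] hsearch_residual[OF hyp, of "Q (Suc p)"]
    hsearch_residual[OF hyp, of "Q q"] hsearch_residual[OF hyp, of "Q (Suc q)"]
  show "\<bar>(total_cost C (hsearch d N C (Q (Suc p))) - total_cost C (hsearch d N C (Q p)))
      - (total_cost C (hsearch d N C (Q (Suc q))) - total_cost C (hsearch d N C (Q q)))\<bar>
      < 2 * Delta d N C"
    by (simp add: abs_less_iff)
qed

end
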